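(* Let $X$ be a compact metrizable countable space and $f:X\to X$ a continuous function such that $(X,f)$ is transitive. If $f^p$ is continuous for every $p\in\mathbb N^*$, then the set $P_f$ is finite.
   Context: $(X,f)$ is transitive if some point has dense orbit $\{f^n(x):n\in\mathbb N\}$. $\mathbb N^*$ is the set of free ultrafilters on $\mathbb N$; for $p\in\mathbb N^*$ the $p$-iterate is $f^p(x)=p\text{-}\lim_{n\to\infty}f^n(x)$, where $y=p\text{-}\lim x_n$ means $\{n: x_n\in V\}\in p$ for every neighborhood $V$ of $y$. A point $x$ is periodic if $f^n(x)=x$ for some $n\ge1$, with period $\min\{n\ge1:f^n(x)=x\}$; $P_f$ is the set of all periods of periodic points of $f$. *)

theory Defs
  imports "HOL-Analysis.Analysis"
begin

definition free_ultrafilter :: "nat set set \<Rightarrow> bool" where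
  "free_ultrafilter p \<longleftrightarrow>
     {} \<notin> p \<and>
     (\<forall>A B. A \<in> p \<and> A \<subseteq> B \<longrightarrow> B \<in> p) \<and>
     (\<forall>A B. A \<in> p \<and> B \<in> p \<longrightarrow> A \<inter> B \<in> p) \<and>
     (\<forall>A. A \<in> p \<or> - A \<in> p) \<and>
     (\<forall>A. finite A \<longrightarrow> A \<notin> p)"

definition is_p_limit :: "'a topology \<Rightarrow> nat set set \<Rightarrow> (nat \<Rightarrow> 'a) \<Rightarrow> 'a \<Rightarrow> bool" where
  "is_p_limit X p s y \<longleftrightarrow> y \<in> topspace X \<and>
     (\<forall>V. openin X V \<and> y \<in> V \<longrightarrow> {n. s n \<in> V} \<in> p)"

definition p_iterate :: "'a topology \<Rightarrow> nat set set \<Rightarrow> ('a \<Rightarrow> 'a) \<Rightarrow> 'a \<Rightarrow> 'a" where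
  "p_iterate X p f x = (THE y. is_p_limit X p (\<lambda>n. (f ^^ n) x) y)"

definition transitive_system :: "'a topology \<Rightarrow> ('a \<Rightarrow> 'a) \<Rightarrow> bool" where
  "transitive_system X f \<longleftrightarrow>
     (\<exists>x \<in> topspace X. X closure_of {(f ^^ n) x | n. True} = topspace X)"

definition periodic_point :: "'a topology \<Rightarrow> ('a \<Rightarrow> 'a) \<Rightarrow> 'a \<Rightarrow> bool" where
  "periodic_point X f x \<longleftrightarrow> x \<in> topspace X \<and> (\<exists>n\<ge>1. (f ^^ n) x = x)"

definition period :: "('a \<Rightarrow> 'a) \<Rightarrow> 'a \<Rightarrow> nat" where
  "period f x = (LEAST n. n \<ge> 1 \<and> (f ^^ n) x = x)"

definition periods :: "'a topology \<Rightarrow> ('a \<Rightarrow> 'a) \<Rightarrow> nat set" where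
  "periods X f = {period f x | x. periodic_point X f x}"

end

theory Submission
  imports Defs
begin

(* If every periodic point lies on the dense orbit of x, that orbit is eventually periodic,
   hence finite, and so are the periodic points.  Otherwise take a periodic point y off the
   orbit: it lies in the closure of the orbit but not on it, so it is an accumulation point of
   f^n(x), and y = p-lim f^n(x) for some free ultrafilter p.  Then f^p(f^k(x)) = f^k(y), so the
   continuous map f^p sends the dense orbit of x, hence all of X, into the finite closed orbit
   of y.  Since f^p(w) stays on the cycle of each periodic point w, that cycle meets the cycle
   of y, so every periodic point has the period of y. *)

lemma
  assumes "free_ultrafilter p"
  shows free_ultrafilter_empty: "{} \<notin> p"
    and free_ultrafilter_mono: "A \<in> p \<Longrightarrow> A \<subseteq> B \<Longrightarrow> B \<in> p"
    and free_ultrafilter_Int: "A \<in> p \<Longrightarrow> B \<in> p \<Longrightarrow> A \<inter> B \<in> p"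
    and free_ultrafilter_Compl: "A \<notin> p \<Longrightarrow> - A \<in> p"
  using assms unfolding free_ultrafilter_def by blast+

lemma free_ultrafilter_UNIV: "free_ultrafilter p \<Longrightarrow> UNIV \<in> p"
  using free_ultrafilter_Compl free_ultrafilter_empty by fastforce

lemma free_ultrafilter_Un:
  assumes p: "free_ultrafilter p" and "A \<union> B \<in> p"
  shows "A \<in> p \<or> B \<in> p"
proof (rule disjCI)
  assume "B \<notin> p"
  then have "(A \<union> B) \<inter> - B \<in> p"
    using assms by (simp add: free_ultrafilter_Compl free_ultrafilter_Int)
  then show "A \<in> p" by (rule free_ultrafilter_mono[OF p]) blast
qed

lemma free_ultrafilter_finite_UN:
  assumes p: "free_ultrafilter p" and "finite I" and "(\<Union>i\<in>I. A i) \<in> p"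
  shows "\<exists>i\<in>I. A i \<in> p"
  using \<open>finite I\<close> \<open>(\<Union>i\<in>I. A i) \<in> p\<close>
proof (induction I rule: finite_induct)
  case empty
  with p show ?case by (simp add: free_ultrafilter_empty)
next
  case (insert i I)
  then show ?case using free_ultrafilter_Un[OF p] by auto
qed

definition proper_set_filter :: "'a set set \<Rightarrow> bool" where
  "proper_set_filter q \<longleftrightarrow> {} \<notin> q \<and> (\<forall>A B. A \<in> q \<and> A \<subseteq> B \<longrightarrow> B \<in> q) \<and>
     (\<forall>A B. A \<in> q \<and> B \<in> q \<longrightarrow> A \<inter> B \<in> q)"

lemma exists_maximal_proper_set_filter:
  assumes "proper_set_filter q\<^sub>0"
  obtains M where "q\<^sub>0 \<subseteq> M" "proper_set_filter M"
    and "\<And>q. proper_set_filter q \<Longrightarrow> M \<subseteq> q \<Longrightarrow> q = M"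
proof -
  define \<A> where "\<A> = {q. q\<^sub>0 \<subseteq> q \<and> proper_set_filter q}"
  have "\<exists>M\<in>\<A>. \<forall>q\<in>\<A>. M \<subseteq> q \<longrightarrow> q = M"
  proof (rule Zorn_Lemma2, intro ballI)
    fix C assume C: "C \<in> chains \<A>"
    show "\<exists>U\<in>\<A>. \<forall>q\<in>C. q \<subseteq> U"
    proof (cases "C = {}")
      case True
      then show ?thesis using assms unfolding \<A>_def by blast
    next
      case False
      have C_proper: "q\<^sub>0 \<subseteq> q \<and> proper_set_filter q" if "q \<in> C" for q
        using chainsD2[OF C] that unfolding \<A>_def by blast
      have "A \<inter> B \<in> \<Union>C" if AB: "A \<in> \<Union>C" "B \<in> \<Union>C" for A B
      proof -
        obtain q r where "q \<in> C" "r \<in> C" "A \<in> q" "B \<in> r" using AB by blast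
        moreover have "q \<subseteq> r \<or> r \<subseteq> q" using chainsD[OF C \<open>q \<in> C\<close> \<open>r \<in> C\<close>] .
        ultimately show ?thesis using C_proper unfolding proper_set_filter_def by blast
      qed
      moreover have "B \<in> \<Union>C" if "A \<in> \<Union>C" "A \<subseteq> B" for A B
        using C_proper that unfolding proper_set_filter_def by blast
      moreover have "{} \<notin> \<Union>C"
        using C_proper unfolding proper_set_filter_def by blast
      ultimately have "proper_set_filter (\<Union>C)"
        unfolding proper_set_filter_def by blast
      moreover have "q\<^sub>0 \<subseteq> \<Union>C" using False C_proper by blast
      ultimately show ?thesis unfolding \<A>_def by blast
    qed
  qed
  then obtain M where M: "M \<in> \<A>" and max: "\<And>q. q \<in> \<A> \<Longrightarrow> M \<subseteq> q \<Longrightarrow> q = M"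
    by blast
  then have "q\<^sub>0 \<subseteq> M" "proper_set_filter M" unfolding \<A>_def by auto
  moreover have "q = M" if "proper_set_filter q" "M \<subseteq> q" for q
    using max that \<open>q\<^sub>0 \<subseteq> M\<close> unfolding \<A>_def by blast
  ultimately show ?thesis using that by blast
qed

lemma maximal_proper_set_filter_Compl:
  assumes M: "proper_set_filter M" "M \<noteq> {}"
    and max: "\<And>q. proper_set_filter q \<Longrightarrow> M \<subseteq> q \<Longrightarrow> q = M"
    and "A \<notin> M"
  shows "- A \<in> M"
proof -
  \<comment> \<open>The filter generated by M and -A; it is proper because no member of M lies inside A.\<close>
  define M' where "M' = {C. \<exists>B\<in>M. B \<inter> - A \<subseteq> C}"
  have "{} \<notin> M'"
  proof
    assume "{} \<in> M'"
    then obtain B where "B \<in> M" "B \<subseteq> A" unfolding M'_def by blast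
    then show False using M(1) \<open>A \<notin> M\<close> unfolding proper_set_filter_def by blast
  qed
  moreover have "D \<in> M'" if "C \<in> M'" "C \<subseteq> D" for C D
    using that unfolding M'_def by blast
  moreover have "C \<inter> D \<in> M'" if CD: "C \<in> M'" "D \<in> M'" for C D
  proof -
    obtain B B' where "B \<in> M" "B' \<in> M" "B \<inter> - A \<subseteq> C" "B' \<inter> - A \<subseteq> D"
      using CD unfolding M'_def by blast
    moreover have "B \<inter> B' \<in> M"
      using M(1) \<open>B \<in> M\<close> \<open>B' \<in> M\<close> unfolding proper_set_filter_def by blast
    ultimately show ?thesis unfolding M'_def by blast
  qed
  ultimately have "proper_set_filter M'" unfolding proper_set_filter_def by blast
  moreover have "M \<subseteq> M'" unfolding M'_def by blast
  ultimately have "M' = M" by (rule max)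
  moreover have "- A \<in> M'" using M(2) unfolding M'_def by blast
  ultimately show ?thesis by simp
qed

lemma exists_free_ultrafilter_superset:
  assumes B: "proper_set_filter B" and cofinite: "\<And>A. finite A \<Longrightarrow> - A \<in> B"
  shows "\<exists>p. free_ultrafilter p \<and> B \<subseteq> p"
proof -
  obtain M where M: "B \<subseteq> M" "proper_set_filter M"
    and max: "\<And>q. proper_set_filter q \<Longrightarrow> M \<subseteq> q \<Longrightarrow> q = M"
    using B by (rule exists_maximal_proper_set_filter) blast
  have "M \<noteq> {}" using M(1) cofinite[of "{}"] by blast
  then have Compl: "- A \<in> M" if "A \<notin> M" for A
    using maximal_proper_set_filter_Compl[OF M(2) _ max that] by blast
  have "A \<notin> M" if "finite A" for A
  proof
    assume "A \<in> M"
    moreover have "- A \<in> M" using cofinite[OF that] M(1) by blast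
    ultimately have "A \<inter> - A \<in> M" using M(2) unfolding proper_set_filter_def by blast
    then show False using M(2) unfolding proper_set_filter_def by simp
  qed
  with M(2) Compl have "free_ultrafilter M"
    unfolding free_ultrafilter_def proper_set_filter_def by (intro conjI) blast+
  with M(1) show ?thesis by blast
qed

lemma is_p_limit_unique:
  assumes "Hausdorff_space X" "free_ultrafilter p" "is_p_limit X p s a" "is_p_limit X p s b"
  shows "a = b"
proof (rule ccontr)
  assume "a \<noteq> b"
  moreover have "a \<in> topspace X" "b \<in> topspace X" using assms(3,4) unfolding is_p_limit_def by auto
  ultimately obtain U V where UV: "openin X U" "openin X V" "a \<in> U" "b \<in> V" "disjnt U V"
    using assms(1) unfolding Hausdorff_space_def by metis
  then have "{n. s n \<in> U} \<inter> {n. s n \<in> V} \<in> p"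
    using assms(2-4) unfolding is_p_limit_def by (simp add: free_ultrafilter_Int)
  moreover have "{n. s n \<in> U} \<inter> {n. s n \<in> V} = {}" using UV(5) by (auto simp: disjnt_def)
  ultimately show False using free_ultrafilter_empty[OF assms(2)] by simp
qed

lemma p_iterate_eqI:
  assumes "Hausdorff_space X" "free_ultrafilter p" "is_p_limit X p (\<lambda>n. (f ^^ n) x) a"
  shows "p_iterate X p f x = a"
  unfolding p_iterate_def
  using assms(3) is_p_limit_unique[OF assms(1,2) _ assms(3)] by (rule the_equality)

lemma is_p_limit_continuous_map:
  assumes "free_ultrafilter p" "continuous_map X Y g" "is_p_limit X p s a"
  shows "is_p_limit Y p (\<lambda>n. g (s n)) (g a)"
  unfolding is_p_limit_def
proof (intro conjI allI impI)
  show "g a \<in> topspace Y" using assms(2,3) unfolding is_p_limit_def continuous_map_def by blast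
  fix V assume V: "openin Y V \<and> g a \<in> V"
  then have "openin X {x \<in> topspace X. g x \<in> V}" using assms(2) unfolding continuous_map_def by blast
  then have "{n. s n \<in> {x \<in> topspace X. g x \<in> V}} \<in> p"
    using assms(3) V unfolding is_p_limit_def by blast
  then show "{n. g (s n) \<in> V} \<in> p" by (rule free_ultrafilter_mono[OF assms(1)]) auto
qed

lemma is_p_limit_periodic:
  assumes p: "free_ultrafilter p" and q: "q \<ge> 1"
    and periodic: "\<And>n. s (n mod q) = s n" and s: "\<And>n. s n \<in> topspace X"
  shows "\<exists>r. is_p_limit X p s (s r)"
proof -
  have "(\<Union>r\<in>{..<q}. {n. n mod q = r}) = UNIV" using q by auto
  then obtain r where r: "{n. n mod q = r} \<in> p"
    using free_ultrafilter_finite_UN[OF p] free_ultrafilter_UNIV[OF p] by (metis finite_lessThan)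
  have "is_p_limit X p s (s r)"
    unfolding is_p_limit_def
  proof (intro conjI allI impI)
    fix V assume "openin X V \<and> s r \<in> V"
    then have "{n. n mod q = r} \<subseteq> {n. s n \<in> V}" using periodic by force
    then show "{n. s n \<in> V} \<in> p" by (rule free_ultrafilter_mono[OF p r])
  qed (rule s)
  then show ?thesis by blast
qed

lemma closure_of_range_frequently:
  fixes s :: "nat \<Rightarrow> 'a"
  assumes "t1_space X" "y \<in> X closure_of range s" "y \<notin> range s" "openin X V" "y \<in> V"
  shows "\<exists>n\<ge>N. s n \<in> V"
proof -
  have "finite (topspace X \<inter> s ` {..<N})" by simp
  then have "closedin X (topspace X \<inter> s ` {..<N})"
    using assms(1) unfolding t1_space_closedin_finite by blast
  moreover have "V - s ` {..<N} = V - (topspace X \<inter> s ` {..<N})"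
    using openin_subset[OF assms(4)] by blast
  ultimately have "openin X (V - s ` {..<N})"
    using assms(4) by (simp add: openin_diff)
  moreover have "y \<in> V - s ` {..<N}" using assms(3,5) by blast
  ultimately have "\<exists>n. s n \<in> V - s ` {..<N}"
    using assms(2) by (auto simp: in_closure_of)
  then obtain n where n: "s n \<in> V" "s n \<notin> s ` {..<N}" by blast
  then have "N \<le> n" by (metis imageI lessThan_iff not_le)
  with n show ?thesis by blast
qed

lemma exists_free_ultrafilter_p_limit:
  assumes "t1_space X" "y \<in> X closure_of range s" "y \<notin> range s"
  shows "\<exists>p. free_ultrafilter p \<and> is_p_limit X p s y"
proof -
  have y: "y \<in> topspace X" using assms(2) by (simp add: in_closure_of)
  define B where "B = {A. \<exists>V N. openin X V \<and> y \<in> V \<and> {n. N \<le> n \<and> s n \<in> V} \<subseteq> A}"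
  have "{} \<notin> B"
    using closure_of_range_frequently[OF assms] unfolding B_def by blast
  moreover have "A' \<in> B" if "A \<in> B" "A \<subseteq> A'" for A A'
    using that unfolding B_def by blast
  moreover have "A \<inter> A' \<in> B" if "A \<in> B" "A' \<in> B" for A A'
  proof -
    obtain V N V' N' where "openin X V" "y \<in> V" "{n. N \<le> n \<and> s n \<in> V} \<subseteq> A"
      "openin X V'" "y \<in> V'" "{n. N' \<le> n \<and> s n \<in> V'} \<subseteq> A'"
      using \<open>A \<in> B\<close> \<open>A' \<in> B\<close> unfolding B_def by blast
    then have "openin X (V \<inter> V')" "y \<in> V \<inter> V'"
      "{n. max N N' \<le> n \<and> s n \<in> V \<inter> V'} \<subseteq> A \<inter> A'" by auto
    then show ?thesis unfolding B_def by blast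
  qed
  ultimately have "proper_set_filter B" unfolding proper_set_filter_def by blast
  moreover have "- A \<in> B" if "finite A" for A
  proof -
    obtain N where "\<forall>n\<in>A. n < N" using \<open>finite A\<close> finite_nat_set_iff_bounded by blast
    then have "{n. N \<le> n \<and> s n \<in> topspace X} \<subseteq> - A" by auto
    then show ?thesis unfolding B_def using y by blast
  qed
  ultimately obtain p where p: "free_ultrafilter p" "B \<subseteq> p"
    using exists_free_ultrafilter_superset by blast
  have "{n. s n \<in> V} \<in> B" if "openin X V" "y \<in> V" for V
    using that unfolding B_def by blast
  with p y have "is_p_limit X p s y" unfolding is_p_limit_def by blast
  with p show ?thesis by blast
qed

lemma continuous_map_funpow:
  assumes "continuous_map X X f"
  shows "continuous_map X X (f ^^ k)"
proof (induction k)
  case (Suc k)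
  then have "continuous_map X X (f \<circ> f ^^ k)" using assms by (rule continuous_map_compose)
  then show ?case by (simp add: comp_def)
qed simp

definition orbit :: "('a \<Rightarrow> 'a) \<Rightarrow> 'a \<Rightarrow> 'a set" where
  "orbit f x = range (\<lambda>n. (f ^^ n) x)"

lemma funpow_add_apply: "(f ^^ m) ((f ^^ n) x) = (f ^^ (m + n)) x"
  by (simp add: funpow_add)

lemma funpow_fixed_funpow: "(f ^^ k) z = z \<Longrightarrow> (f ^^ k) ((f ^^ j) z) = (f ^^ j) z"
  by (metis funpow_add_apply add.commute)

lemma period_funpow:
  assumes "(f ^^ q) w = w" "q \<ge> 1"
  shows "period f ((f ^^ r) w) = period f w"
proof -
  have "(f ^^ (q * r)) w = w" using funpow_mod_eq[OF assms(1), of "q * r"] by simp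
  moreover have "q * r - r + r = q * r" using assms(2) by simp
  ultimately have return: "(f ^^ (q * r - r)) ((f ^^ r) w) = w" by (simp add: funpow_add_apply)
  have "(f ^^ k) ((f ^^ r) w) = (f ^^ r) w \<longleftrightarrow> (f ^^ k) w = w" for k
  proof
    assume "(f ^^ k) ((f ^^ r) w) = (f ^^ r) w"
    then have "(f ^^ k) ((f ^^ (q * r - r)) ((f ^^ r) w)) = (f ^^ (q * r - r)) ((f ^^ r) w)"
      by (rule funpow_fixed_funpow)
    then show "(f ^^ k) w = w" by (simp only: return)
  qed (rule funpow_fixed_funpow)
  then show ?thesis unfolding period_def by simp
qed

lemma orbit_periodic:
  assumes "(f ^^ q) y = y" "q \<ge> 1"
  shows "orbit f y = (\<lambda>r. (f ^^ r) y) ` {..<q}"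
proof
  show "orbit f y \<subseteq> (\<lambda>r. (f ^^ r) y) ` {..<q}"
  proof
    fix z assume "z \<in> orbit f y"
    then obtain n where "z = (f ^^ (n mod q)) y"
      unfolding orbit_def using funpow_mod_eq[OF assms(1)] by auto
    moreover have "n mod q < q" using assms(2) by simp
    ultimately show "z \<in> (\<lambda>r. (f ^^ r) y) ` {..<q}" by blast
  qed
qed (auto simp: orbit_def)

lemma finite_orbit_eventually_periodic:
  assumes "(f ^^ q) ((f ^^ m) x) = (f ^^ m) x" "q \<ge> 1"
  shows "finite (orbit f x)"
proof (rule finite_subset)
  show "orbit f x \<subseteq> (\<lambda>n. (f ^^ n) x) ` {..<m} \<union> orbit f ((f ^^ m) x)"
  proof
    fix z assume "z \<in> orbit f x"
    then obtain n where z: "z = (f ^^ n) x" unfolding orbit_def by blast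
    show "z \<in> (\<lambda>n. (f ^^ n) x) ` {..<m} \<union> orbit f ((f ^^ m) x)"
    proof (cases "n < m")
      case False
      then have "z = (f ^^ (n - m)) ((f ^^ m) x)" by (simp add: z funpow_add_apply)
      then show ?thesis unfolding orbit_def by blast
    qed (use z in blast)
  qed
  show "finite ((\<lambda>n. (f ^^ n) x) ` {..<m} \<union> orbit f ((f ^^ m) x))"
    by (simp add: orbit_periodic[OF assms])
qed

lemma orbit_subset_topspace:
  assumes "continuous_map X X f" "x \<in> topspace X"
  shows "orbit f x \<subseteq> topspace X"
  unfolding orbit_def
  using continuous_map_image_subset_topspace[OF continuous_map_funpow[OF assms(1)]] assms(2) by blast

lemma p_iterate_funpow:
  assumes H: "Hausdorff_space X" and p: "free_ultrafilter p" and f: "continuous_map X X f"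
    and lim: "is_p_limit X p (\<lambda>n. (f ^^ n) x) y"
  shows "p_iterate X p f ((f ^^ k) x) = (f ^^ k) y"
proof -
  have "is_p_limit X p (\<lambda>n. (f ^^ k) ((f ^^ n) x)) ((f ^^ k) y)"
    by (rule is_p_limit_continuous_map[OF p continuous_map_funpow[OF f] lim])
  moreover have "(f ^^ k) ((f ^^ n) x) = (f ^^ n) ((f ^^ k) x)" for n
    by (simp add: funpow_add_apply add.commute)
  ultimately show ?thesis by (intro p_iterate_eqI[OF H p]) simp
qed

lemma p_iterate_periodic_point:
  assumes H: "Hausdorff_space X" and p: "free_ultrafilter p" and f: "continuous_map X X f"
    and w: "periodic_point X f w"
  shows "\<exists>r. p_iterate X p f w = (f ^^ r) w"
proof -
  obtain q where q: "(f ^^ q) w = w" "q \<ge> 1" and wX: "w \<in> topspace X"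
    using w unfolding periodic_point_def by blast
  have "\<exists>r. is_p_limit X p (\<lambda>n. (f ^^ n) w) ((f ^^ r) w)"
  proof (rule is_p_limit_periodic[OF p q(2)])
    show "(f ^^ (n mod q)) w = (f ^^ n) w" for n by (rule funpow_mod_eq[OF q(1)])
    show "(f ^^ n) w \<in> topspace X" for n
      using orbit_subset_topspace[OF f wX] unfolding orbit_def by blast
  qed
  then show ?thesis using p_iterate_eqI[OF H p] by blast
qed

lemma periods_eq_if_periodic_point_outside_dense_orbit:
  assumes H: "Hausdorff_space X" and f: "continuous_map X X f"
    and dense: "X closure_of orbit f x = topspace X"
    and y: "periodic_point X f y" "y \<notin> orbit f x"
    and cont: "\<forall>p. free_ultrafilter p \<longrightarrow> continuous_map X X (p_iterate X p f)"
  shows "periods X f = {period f y}"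
proof -
  obtain q where q: "(f ^^ q) y = y" "q \<ge> 1" and yX: "y \<in> topspace X"
    using y(1) unfolding periodic_point_def by blast
  obtain p where p: "free_ultrafilter p" and lim: "is_p_limit X p (\<lambda>n. (f ^^ n) x) y"
    using exists_free_ultrafilter_p_limit[OF Hausdorff_imp_t1_space[OF H]] dense yX y(2)
    unfolding orbit_def by metis
  define g where "g = p_iterate X p f"
  have g: "continuous_map X X g" using cont p unfolding g_def by blast
  have "g ` orbit f x \<subseteq> orbit f y"
    using p_iterate_funpow[OF H p f lim] unfolding g_def orbit_def by auto
  moreover have "closedin X (orbit f y)"
    using closedin_Hausdorff_finite[OF H orbit_subset_topspace[OF f yX]] orbit_periodic[OF q] by simp
  ultimately have g_orbit: "g ` topspace X \<subseteq> orbit f y"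
    using continuous_map_image_closure_subset[OF g, of "orbit f x"] dense
    by (metis closure_of_closedin closure_of_mono order_trans)
  have "period f w = period f y" if w: "periodic_point X f w" for w
  proof -
    obtain qw where qw: "(f ^^ qw) w = w" "qw \<ge> 1" and wX: "w \<in> topspace X"
      using w unfolding periodic_point_def by blast
    obtain r where "g w = (f ^^ r) w"
      using p_iterate_periodic_point[OF H p f w] unfolding g_def by blast
    moreover obtain b where "g w = (f ^^ b) y"
      using g_orbit wX unfolding orbit_def by blast
    ultimately show ?thesis using period_funpow[OF qw, of r] period_funpow[OF q, of b] by simp
  qed
  then show ?thesis using y(1) unfolding periods_def by blast
qed

lemma finite_periods_if_periodic_points_in_orbit:
  assumes "{w. periodic_point X f w} \<subseteq> orbit f x"
  shows "finite (periods X f)"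
proof (cases "\<exists>w. periodic_point X f w")
  case True
  then obtain w q where w: "periodic_point X f w" "(f ^^ q) w = w" "q \<ge> 1"
    unfolding periodic_point_def by blast
  then obtain m where "w = (f ^^ m) x" using assms unfolding orbit_def by blast
  with w(2,3) have "finite (orbit f x)" by (intro finite_orbit_eventually_periodic) simp_all
  moreover have "periods X f \<subseteq> period f ` orbit f x" using assms unfolding periods_def by blast
  ultimately show ?thesis using finite_subset by blast
qed (simp add: periods_def)

theorem corollary4p3:
  fixes X :: "'a topology" and f :: "'a \<Rightarrow> 'a"
  assumes "compact_space X" and "metrizable_space X" and "countable (topspace X)"
    and "continuous_map X X f"
    and "transitive_system X f"
    and "\<forall>p. free_ultrafilter p \<longrightarrow> continuous_map X X (p_iterate X p f)"
  shows "finite (periods X f)"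
proof -
  have H: "Hausdorff_space X" using assms(2) by (rule metrizable_imp_Hausdorff_space)
  obtain x where dense: "X closure_of orbit f x = topspace X"
    using assms(5) unfolding transitive_system_def orbit_def by (auto simp: full_SetCompr_eq)
  show ?thesis
  proof (cases "\<exists>y. periodic_point X f y \<and> y \<notin> orbit f x")
    case True
    then obtain y where "periodic_point X f y" "y \<notin> orbit f x" by blast
    then have "periods X f = {period f y}"
      by (rule periods_eq_if_periodic_point_outside_dense_orbit[OF H assms(4) dense _ _ assms(6)])
    then show ?thesis by simp
  next
    case False
    then show ?thesis by (intro finite_periods_if_periodic_points_in_orbit[of X f x]) blast
  qed
qed

end
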